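(* Consider the system for scalar functions $p(z),q(z)$ \[ p'''= 3pp'+3q'+zp'+2p,\qquad q'''= 12pq'+6p'q+3p''+4zq'-2q. \] (i) This system admits the isomonodromic Lax representation ${\cal A}'={\cal B}_\zeta+[{\cal B},{\cal A}]$ (identically in the spectral parameter $\zeta$) with the $5\times5$ matrices \[ {\cal A}={\cal A}_0+\frac{1}{\zeta}{\cal A}_{-1},\qquad {\cal A}_{-1}= \begin{pmatrix} 0 & 0 & p+z & 0 & -1 \\ 0 & 0 & 0 & 0 & 0 \\ -p''+2p(p+z)+2q & 0 & p' & -2p & 0 \\ p'(p+z)-q' & 0 & 2q & -p' & 0 \\ p''(p+z)+p'+4pq-q'' & 0 & q' & 2q-p'' & 0 \end{pmatrix}, \] \[ {\cal A}_0= \begin{pmatrix} 0 & p+z-\zeta^2 & -\zeta & 0 & 0 \\ p+z-\zeta^2 & 0 & 0 & -1 & 0 \\ -2p\zeta & p' & 0 & 0 & 0 \\ -p'\zeta & 2q & 0 & 0 & 0 \\ (2q-p'')\zeta & q' & 0 & 0 & 0 \end{pmatrix},\qquad {\cal B}= \begin{pmatrix} 0 & \zeta & 1 & 0 & 0 \\ \zeta & 0 & 0 & 0 & 0 \\ 2p & 0 & 0 & 1 & 0 \\ p' & 0 & 0 & 0 & 1 \\ p''-2q & 0 & 1 & 3p+z & 0 \end{pmatrix}. \] (ii) The following quantities are first integrals of the system: \[ H_1=q''-6pq+2zq-2(p+z)p''+(p')^2-p'+2p(p+z)^2, \] \[ H_2= 2q(p''-2q)^2-2q'(p'p''-2p'q-pq')+((p')^2-4pq)(q''-p'-6pq-2zq).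 \]
   Context: Primes denote derivatives with respect to $z$; $\zeta$ is a spectral parameter independent of $z$. "Admits the Lax representation" means that the matrix equation ${\cal A}'={\cal B}_\zeta+[{\cal B},{\cal A}]$ holds by virtue of the system. *)

theory Defs
  imports "HOL-Analysis.Analysis" "HOL-Library.Numeral_Type"
begin

text \<open>5x5 real matrices built row by row; the arguments are the values
  p, p', p'', q, q', q'' at the point z, the point z itself and the spectral
  parameter zeta.\<close>

definition mat5 :: "real list list \<Rightarrow> real^5^5" where
  "mat5 rs = vector (map vector rs)"

definition laxAm1 :: "real \<Rightarrow> real \<Rightarrow> real \<Rightarrow> real \<Rightarrow> real \<Rightarrow> real \<Rightarrow> real \<Rightarrow> real^5^5" where
  "laxAm1 p p1 p2 q q1 q2 z = mat5
    [[0, 0, p + z, 0, -1],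
     [0, 0, 0, 0, 0],
     [-p2 + 2*p*(p+z) + 2*q, 0, p1, -2*p, 0],
     [p1*(p+z) - q1, 0, 2*q, -p1, 0],
     [p2*(p+z) + p1 + 4*p*q - q2, 0, q1, 2*q - p2, 0]]"

definition laxA0 :: "real \<Rightarrow> real \<Rightarrow> real \<Rightarrow> real \<Rightarrow> real \<Rightarrow> real \<Rightarrow> real \<Rightarrow> real \<Rightarrow> real^5^5" where
  "laxA0 p p1 p2 q q1 q2 z \<zeta> = mat5
    [[0, p + z - \<zeta>^2, -\<zeta>, 0, 0],
     [p + z - \<zeta>^2, 0, 0, -1, 0],
     [-2*p*\<zeta>, p1, 0, 0, 0],
     [-p1*\<zeta>, 2*q, 0, 0, 0],
     [(2*q - p2)*\<zeta>, q1, 0, 0, 0]]"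

definition laxA :: "real \<Rightarrow> real \<Rightarrow> real \<Rightarrow> real \<Rightarrow> real \<Rightarrow> real \<Rightarrow> real \<Rightarrow> real \<Rightarrow> real^5^5" where
  "laxA p p1 p2 q q1 q2 z \<zeta> =
     laxA0 p p1 p2 q q1 q2 z \<zeta> + (1 / \<zeta>) *\<^sub>R laxAm1 p p1 p2 q q1 q2 z"

definition laxB :: "real \<Rightarrow> real \<Rightarrow> real \<Rightarrow> real \<Rightarrow> real \<Rightarrow> real \<Rightarrow> real \<Rightarrow> real \<Rightarrow> real^5^5" where
  "laxB p p1 p2 q q1 q2 z \<zeta> = mat5
    [[0, \<zeta>, 1, 0, 0],
     [\<zeta>, 0, 0, 0, 0],
     [2*p, 0, 0, 1, 0],
     [p1, 0, 0, 0, 1],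
     [p2 - 2*q, 0, 1, 3*p + z, 0]]"

definition H1 :: "real \<Rightarrow> real \<Rightarrow> real \<Rightarrow> real \<Rightarrow> real \<Rightarrow> real \<Rightarrow> real \<Rightarrow> real" where
  "H1 p p1 p2 q q1 q2 z =
     q2 - 6*p*q + 2*z*q - 2*(p+z)*p2 + p1^2 - p1 + 2*p*(p+z)^2"

definition H2 :: "real \<Rightarrow> real \<Rightarrow> real \<Rightarrow> real \<Rightarrow> real \<Rightarrow> real \<Rightarrow> real \<Rightarrow> real" where
  "H2 p p1 p2 q q1 q2 z =
     2*q*(p2 - 2*q)^2 - 2*q1*(p1*p2 - 2*p1*q - p*q1)
     + (p1^2 - 4*p*q)*(q2 - p1 - 6*p*q - 2*z*q)"

end

theory Submission
  imports Defs
begin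

text \<open>Both parts are identities along an arbitrary curve \<open>(p, p', p'', q, q', q'')\<close>, valid
  without the equations of motion: differentiating \<open>\<A>\<close>, \<open>H\<^sub>1\<close> and \<open>H\<^sub>2\<close> by the chain rule,
  the defect from \<open>\<B>\<^sub>\<zeta> + [\<B>, \<A>]\<close> (respectively from \<open>0\<close>) is the residual
  \<open>p''' - (3pp' + 3q' + zp' + 2p)\<close> of the first equation times the partial derivative with
  respect to \<open>p''\<close>, plus the residual of the second equation times the partial derivative
  with respect to \<open>q''\<close>. The system says exactly that both residuals vanish.\<close>

lemma vec_eq_sum_axis: "x = (\<Sum>i\<in>UNIV. axis i (x $ i))"
  by (simp add: vec_eq_iff sum_component axis_def if_distrib cong: if_cong)

lemma norm_axis: "norm (axis i x) = norm x"
proof -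
  have "(\<Sum>j\<in>UNIV. (norm (axis i x $ j))\<^sup>2) = (norm x)\<^sup>2"
    by (simp add: axis_def if_distrib[of "\<lambda>v. (norm v)\<^sup>2"] cong: if_cong)
  then show ?thesis
    by (simp add: norm_vec_def L2_set_def)
qed

lemma bounded_linear_axis: "bounded_linear (axis i :: 'a::real_normed_vector \<Rightarrow> 'a^'n)"
proof (rule bounded_linear_intro[where K = 1])
  show "norm (axis i x) \<le> norm x * 1" for x :: 'a
    by (simp add: norm_axis)
qed (simp_all add: axis_def vec_eq_iff)

lemma has_vector_derivative_vecI:
  fixes f :: "real \<Rightarrow> 'a::real_normed_vector^'n"
  assumes "\<And>i. ((\<lambda>w. f w $ i) has_vector_derivative D $ i) F"
  shows "(f has_vector_derivative D) F"
proof -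
  have "((\<lambda>w. \<Sum>i\<in>UNIV. axis i (f w $ i)) has_vector_derivative (\<Sum>i\<in>UNIV. axis i (D $ i))) F"
    by (intro has_vector_derivative_sum bounded_linear.has_vector_derivative[OF bounded_linear_axis] assms)
  then show ?thesis
    by (simp flip: vec_eq_sum_axis)
qed

lemma has_vector_derivative_matrixI:
  fixes f :: "real \<Rightarrow> real^'n^'m"
  assumes "\<And>i j. ((\<lambda>w. f w $ i $ j) has_real_derivative D $ i $ j) F"
  shows "(f has_vector_derivative D) F"
  using assms by (intro has_vector_derivative_vecI) (simp add: has_real_derivative_iff_has_vector_derivative)

lemma exhaust_5:
  fixes x :: 5
  shows "x = 1 \<or> x = 2 \<or> x = 3 \<or> x = 4 \<or> x = 5"
proof (induct x)
  case (of_int z)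
  then have "z = 0 \<or> z = 1 \<or> z = 2 \<or> z = 3 \<or> z = 4"
    by fastforce
  then show ?case
    by auto
qed

lemma UNIV_5: "UNIV = {1, 2, 3, 4, 5::5}"
  using exhaust_5 by auto

lemma sum_5: "sum f (UNIV::5 set) = f 1 + f 2 + f 3 + f 4 + f 5"
  unfolding UNIV_5 by (simp add: ac_simps)

lemma vector_5 [simp]:
  "(vector [a, b, c, d, e] :: 'a::zero^5) $ 1 = a"
  "(vector [a, b, c, d, e] :: 'a::zero^5) $ 2 = b"
  "(vector [a, b, c, d, e] :: 'a::zero^5) $ 3 = c"
  "(vector [a, b, c, d, e] :: 'a::zero^5) $ 4 = d"
  "(vector [a, b, c, d, e] :: 'a::zero^5) $ 5 = e"
  unfolding vector_def by simp_all

definition laxB_spectral_derivative :: "real^5^5" where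
  "laxB_spectral_derivative = mat5
    [[0, 1, 0, 0, 0],
     [1, 0, 0, 0, 0],
     [0, 0, 0, 0, 0],
     [0, 0, 0, 0, 0],
     [0, 0, 0, 0, 0]]"

lemma vector_derivative_laxB_spectral:
  "vector_derivative (\<lambda>\<xi>. laxB p p1 p2 q q1 q2 z \<xi>) (at \<zeta>) = laxB_spectral_derivative"
proof (rule vector_derivative_at, rule has_vector_derivative_matrixI)
  fix i j :: 5
  show "((\<lambda>\<xi>. laxB p p1 p2 q q1 q2 z \<xi> $ i $ j) has_real_derivative laxB_spectral_derivative $ i $ j) (at \<zeta>)"
    using exhaust_5[of i] exhaust_5[of j]
    by (elim disjE) (auto simp: laxB_def laxB_spectral_derivative_def mat5_def)
qed

text \<open>\<open>\<A>\<close> is affine in \<open>p''\<close> and \<open>q''\<close>; these are its coefficients.\<close>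

definition laxA_dp2 :: "real \<Rightarrow> real \<Rightarrow> real \<Rightarrow> real^5^5" where
  "laxA_dp2 p z \<zeta> = mat5
    [[0, 0, 0, 0, 0],
     [0, 0, 0, 0, 0],
     [-1/\<zeta>, 0, 0, 0, 0],
     [0, 0, 0, 0, 0],
     [(p + z)/\<zeta> - \<zeta>, 0, 0, -1/\<zeta>, 0]]"

definition laxA_dq2 :: "real \<Rightarrow> real^5^5" where
  "laxA_dq2 \<zeta> = mat5
    [[0, 0, 0, 0, 0],
     [0, 0, 0, 0, 0],
     [0, 0, 0, 0, 0],
     [0, 0, 0, 0, 0],
     [-1/\<zeta>, 0, 0, 0, 0]]"

definition p_residual :: "real \<Rightarrow> real \<Rightarrow> real \<Rightarrow> real \<Rightarrow> real \<Rightarrow> real" where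
  "p_residual p p1 p3 q1 z = p3 - (3*p*p1 + 3*q1 + z*p1 + 2*p)"

definition q_residual :: "real \<Rightarrow> real \<Rightarrow> real \<Rightarrow> real \<Rightarrow> real \<Rightarrow> real \<Rightarrow> real \<Rightarrow> real" where
  "q_residual p p1 p2 q q1 q3 z = q3 - (12*p*q1 + 6*p1*q + 3*p2 + 4*z*q1 - 2*q)"

context
  fixes p p1 p2 q q1 q2 :: "real \<Rightarrow> real" and z p3 q3 :: real
  assumes p_deriv: "(p has_real_derivative p1 z) (at z)"
      and p1_deriv: "(p1 has_real_derivative p2 z) (at z)"
      and p2_deriv: "(p2 has_real_derivative p3) (at z)"
      and q_deriv: "(q has_real_derivative q1 z) (at z)"
      and q1_deriv: "(q1 has_real_derivative q2 z) (at z)"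
      and q2_deriv: "(q2 has_real_derivative q3) (at z)"
begin

lemma laxA_has_vector_derivative:
  assumes "\<zeta> \<noteq> 0"
  shows "((\<lambda>w. laxA (p w) (p1 w) (p2 w) (q w) (q1 w) (q2 w) w \<zeta>) has_vector_derivative
     laxB_spectral_derivative
     + laxB (p z) (p1 z) (p2 z) (q z) (q1 z) (q2 z) z \<zeta> ** laxA (p z) (p1 z) (p2 z) (q z) (q1 z) (q2 z) z \<zeta>
     - laxA (p z) (p1 z) (p2 z) (q z) (q1 z) (q2 z) z \<zeta> ** laxB (p z) (p1 z) (p2 z) (q z) (q1 z) (q2 z) z \<zeta>
     + p_residual (p z) (p1 z) p3 (q1 z) z *\<^sub>R laxA_dp2 (p z) z \<zeta>
     + q_residual (p z) (p1 z) (p2 z) (q z) (q1 z) q3 z *\<^sub>R laxA_dq2 \<zeta>) (at z)"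
  apply (rule has_vector_derivative_matrixI)
  subgoal for i j
    using exhaust_5[of i] exhaust_5[of j]
    by (elim disjE)
      (simp_all add: laxA_def laxA0_def laxAm1_def laxB_def laxB_spectral_derivative_def
        laxA_dp2_def laxA_dq2_def p_residual_def q_residual_def mat5_def
        matrix_matrix_mult_def sum_5 power2_eq_square,
       auto intro!: derivative_eq_intros p_deriv p1_deriv p2_deriv q_deriv q1_deriv q2_deriv
        simp: field_simps assms)
  done

lemma H1_has_real_derivative:
  "((\<lambda>w. H1 (p w) (p1 w) (p2 w) (q w) (q1 w) (q2 w) w) has_real_derivative
     q_residual (p z) (p1 z) (p2 z) (q z) (q1 z) q3 z
     - 2 * (p z + z) * p_residual (p z) (p1 z) p3 (q1 z) z) (at z)"
  unfolding H1_def
  by (auto intro!: derivative_eq_intros p_deriv p1_deriv p2_deriv q_deriv q1_deriv q2_deriv)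
    (simp add: p_residual_def q_residual_def algebra_simps power2_eq_square)

lemma H2_has_real_derivative:
  "((\<lambda>w. H2 (p w) (p1 w) (p2 w) (q w) (q1 w) (q2 w) w) has_real_derivative
     (4 * q z * (p2 z - 2 * q z) - 2 * p1 z * q1 z) * p_residual (p z) (p1 z) p3 (q1 z) z
     + ((p1 z)\<^sup>2 - 4 * p z * q z) * q_residual (p z) (p1 z) (p2 z) (q z) (q1 z) q3 z) (at z)"
  unfolding H2_def
  by (auto intro!: derivative_eq_intros p_deriv p1_deriv p2_deriv q_deriv q1_deriv q2_deriv)
    (simp add: p_residual_def q_residual_def algebra_simps power2_eq_square)

end

theorem proposition4:
  fixes p p1 p2 p3 q q1 q2 q3 :: "real \<Rightarrow> real"
  assumes dp:  "\<And>z. (p  has_real_derivative p1 z) (at z)"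
      and dp1: "\<And>z. (p1 has_real_derivative p2 z) (at z)"
      and dp2: "\<And>z. (p2 has_real_derivative p3 z) (at z)"
      and dq:  "\<And>z. (q  has_real_derivative q1 z) (at z)"
      and dq1: "\<And>z. (q1 has_real_derivative q2 z) (at z)"
      and dq2: "\<And>z. (q2 has_real_derivative q3 z) (at z)"
      and eqp: "\<And>z. p3 z = 3 * p z * p1 z + 3 * q1 z + z * p1 z + 2 * p z"
      and eqq: "\<And>z. q3 z = 12 * p z * q1 z + 6 * p1 z * q z + 3 * p2 z + 4 * z * q1 z - 2 * q z"
  shows "(\<forall>z \<zeta>. \<zeta> \<noteq> 0 \<longrightarrow>
            ((\<lambda>w. laxA (p w) (p1 w) (p2 w) (q w) (q1 w) (q2 w) w \<zeta>) has_vector_derivative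
               (vector_derivative (\<lambda>\<xi>. laxB (p z) (p1 z) (p2 z) (q z) (q1 z) (q2 z) z \<xi>) (at \<zeta>)
                + laxB (p z) (p1 z) (p2 z) (q z) (q1 z) (q2 z) z \<zeta> ** laxA (p z) (p1 z) (p2 z) (q z) (q1 z) (q2 z) z \<zeta>
                - laxA (p z) (p1 z) (p2 z) (q z) (q1 z) (q2 z) z \<zeta> ** laxB (p z) (p1 z) (p2 z) (q z) (q1 z) (q2 z) z \<zeta>))
            (at z))
       \<and> (\<forall>z. ((\<lambda>w. H1 (p w) (p1 w) (p2 w) (q w) (q1 w) (q2 w) w) has_real_derivative 0) (at z))
       \<and> (\<forall>z. ((\<lambda>w. H2 (p w) (p1 w) (p2 w) (q w) (q1 w) (q2 w) w) has_real_derivative 0) (at z))"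
proof -
  have residuals_vanish:
    "p_residual (p z) (p1 z) (p3 z) (q1 z) z = 0"
    "q_residual (p z) (p1 z) (p2 z) (q z) (q1 z) (q3 z) z = 0" for z
    by (simp_all add: p_residual_def q_residual_def eqp eqq)
  show ?thesis
    using laxA_has_vector_derivative[OF dp dp1 dp2 dq dq1 dq2]
      H1_has_real_derivative[OF dp dp1 dp2 dq dq1 dq2]
      H2_has_real_derivative[OF dp dp1 dp2 dq dq1 dq2]
    by (simp add: vector_derivative_laxB_spectral residuals_vanish)
qed

end
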